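(* Let $R$ be a commutative ring and $\mathcal A$ an $R$-algebra whose structure map $R\to\mathcal A$ is injective (so $R\subseteq\mathcal A$). Then $\mathcal A$ is a strongly simple $R$-algebra if and only if the following three statements hold: (i) $R$ is an integral domain; (ii) $\mathcal A\simeq K_R$ as $R$-algebras; (iii) $K_R$ as an $R$-algebra is strongly simple.
   Context: Algebras are associative, unital and nonzero. $K_R$ denotes the field of fractions of an integral domain $R$. An $R$-submodule $M$ of $\mathcal A$ is a (two-sided) Mathieu subspace if whenever $a\in\mathcal A$ satisfies $a^m\in M$ for all $m\ge1$, then for all $b,c\in\mathcal A$ there is $N$ with $ba^mc\in M$ for all $m\ge N$. $\mathcal A$ is a strongly simple $R$-algebra if its only Mathieu subspaces are $0$ and $\mathcal A$. *)

theory Defs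
  imports "HOL-Algebra.Algebra"
begin

definition is_algebra :: "('r, 'm) ring_scheme \<Rightarrow> ('a, 'n) ring_scheme \<Rightarrow> ('r \<Rightarrow> 'a) \<Rightarrow> bool" where
  "is_algebra R A phi \<longleftrightarrow> cring R \<and> ring A \<and> phi \<in> ring_hom R A \<and>
     (\<forall>r\<in>carrier R. \<forall>x\<in>carrier A. phi r \<otimes>\<^bsub>A\<^esub> x = x \<otimes>\<^bsub>A\<^esub> phi r)"

definition is_submodule :: "('r, 'm) ring_scheme \<Rightarrow> ('a, 'n) ring_scheme \<Rightarrow> ('r \<Rightarrow> 'a) \<Rightarrow> 'a set \<Rightarrow> bool" where
  "is_submodule R A phi M \<longleftrightarrow> M \<subseteq> carrier A \<and> \<zero>\<^bsub>A\<^esub> \<in> M \<and>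
     (\<forall>x\<in>M. \<forall>y\<in>M. x \<oplus>\<^bsub>A\<^esub> y \<in> M) \<and>
     (\<forall>r\<in>carrier R. \<forall>x\<in>M. phi r \<otimes>\<^bsub>A\<^esub> x \<in> M)"

definition is_mathieu_subspace :: "('r, 'm) ring_scheme \<Rightarrow> ('a, 'n) ring_scheme \<Rightarrow> ('r \<Rightarrow> 'a) \<Rightarrow> 'a set \<Rightarrow> bool" where
  "is_mathieu_subspace R A phi M \<longleftrightarrow> is_submodule R A phi M \<and>
     (\<forall>a\<in>carrier A. (\<forall>m::nat. m \<ge> 1 \<longrightarrow> a [^]\<^bsub>A\<^esub> m \<in> M) \<longrightarrow>
        (\<forall>b\<in>carrier A. \<forall>c\<in>carrier A. \<exists>N::nat. \<forall>m\<ge>N. b \<otimes>\<^bsub>A\<^esub> (a [^]\<^bsub>A\<^esub> m) \<otimes>\<^bsub>A\<^esub> c \<in> M))"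

definition strongly_simple :: "('r, 'm) ring_scheme \<Rightarrow> ('a, 'n) ring_scheme \<Rightarrow> ('r \<Rightarrow> 'a) \<Rightarrow> bool" where
  "strongly_simple R A phi \<longleftrightarrow>
     (\<forall>M. is_mathieu_subspace R A phi M \<longrightarrow> M = {\<zero>\<^bsub>A\<^esub>} \<or> M = carrier A)"

text \<open>Field of fractions K_R of an integral domain R: classes of pairs (a,b), b nonzero,
  under (a,b) ~ (c,d) iff a d = c b.  (Meaningful when R is a domain.)\<close>

definition frac_class :: "('r, 'm) ring_scheme \<Rightarrow> 'r \<times> 'r \<Rightarrow> ('r \<times> 'r) set" where
  "frac_class R p = {(c, d). c \<in> carrier R \<and> d \<in> carrier R - {\<zero>\<^bsub>R\<^esub>} \<and>
      fst p \<otimes>\<^bsub>R\<^esub> d = c \<otimes>\<^bsub>R\<^esub> snd p}"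

definition frac_mult :: "('r, 'm) ring_scheme \<Rightarrow> ('r \<times> 'r) set \<Rightarrow> ('r \<times> 'r) set \<Rightarrow> ('r \<times> 'r) set" where
  "frac_mult R U V = \<Union> ((\<lambda>((a, b), (c, d)). frac_class R (a \<otimes>\<^bsub>R\<^esub> c, b \<otimes>\<^bsub>R\<^esub> d)) ` (U \<times> V))"

definition frac_add :: "('r, 'm) ring_scheme \<Rightarrow> ('r \<times> 'r) set \<Rightarrow> ('r \<times> 'r) set \<Rightarrow> ('r \<times> 'r) set" where
  "frac_add R U V = \<Union> ((\<lambda>((a, b), (c, d)). frac_class R ((a \<otimes>\<^bsub>R\<^esub> d) \<oplus>\<^bsub>R\<^esub> (c \<otimes>\<^bsub>R\<^esub> b), b \<otimes>\<^bsub>R\<^esub> d)) ` (U \<times> V))"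

definition frac_field :: "('r, 'm) ring_scheme \<Rightarrow> (('r \<times> 'r) set) ring" where
  "frac_field R =
     \<lparr> carrier = frac_class R ` (carrier R \<times> (carrier R - {\<zero>\<^bsub>R\<^esub>})),
       Group.monoid.mult = frac_mult R,
       Group.monoid.one = frac_class R (\<one>\<^bsub>R\<^esub>, \<one>\<^bsub>R\<^esub>),
       Ring.ring.zero = frac_class R (\<zero>\<^bsub>R\<^esub>, \<one>\<^bsub>R\<^esub>),
       Ring.ring.add = frac_add R \<rparr>"

definition frac_embed :: "('r, 'm) ring_scheme \<Rightarrow> 'r \<Rightarrow> ('r \<times> 'r) set" where
  "frac_embed R r = frac_class R (r, \<one>\<^bsub>R\<^esub>)"

definition algebra_iso :: "('r, 'm) ring_scheme \<Rightarrow> ('a, 'n) ring_scheme \<Rightarrow> ('r \<Rightarrow> 'a)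
    \<Rightarrow> ('b, 'k) ring_scheme \<Rightarrow> ('r \<Rightarrow> 'b) \<Rightarrow> bool" where
  "algebra_iso R A phi B psi \<longleftrightarrow>
     (\<exists>f. f \<in> ring_iso A B \<and> (\<forall>r\<in>carrier R. f (phi r) = psi r))"

end

theory Submission
  imports Defs
begin

text \<open>
  Suppose \<open>A\<close> is strongly simple. Every submodule of \<open>A\<close> that is a two-sided ideal, or that
  consists of square-zero elements, satisfies the Mathieu condition and is therefore trivial.
  Hence central nonzero elements, in particular the images of nonzero scalars, are units (so \<open>R\<close>
  is a domain), \<open>A\<close> has no nonzero square-zero elements, and its only idempotents are \<open>0\<close> and
  \<open>1\<close>. For \<open>x \<in> A\<close> the set \<open>K\<^sub>R x \<inter> A\<close> is a submodule. If it is a Mathieu subspace it is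
  \<open>0\<close> or \<open>A\<close>, and either way \<open>x \<in> K\<^sub>R\<close>. Otherwise some \<open>a \<in> K\<^sub>R x\<close> with all powers in
  \<open>K\<^sub>R x\<close> violates the condition; then \<open>a \<noteq> 0\<close>, and comparing \<open>a\<close> with \<open>a\<^sup>2\<close> yields a relation
  \<open>\<alpha> x\<^sup>2 = \<beta> x\<close> with \<open>\<alpha> \<noteq> 0\<close>. Then either \<open>x\<^sup>2 = 0\<close> or \<open>(\<alpha>/\<beta>) x\<close> is idempotent, and in both
  cases \<open>x \<in> K\<^sub>R\<close>. Thus \<open>A = K\<^sub>R\<close>; the converse is transport of Mathieu subspaces along the
  isomorphism.
\<close>

section \<open>Transport along isomorphisms\<close>

lemma ring_iso_zero_imp_ring:
  assumes "ring A" and "f \<in> ring_iso A B" and "f \<zero>\<^bsub>A\<^esub> = \<zero>\<^bsub>B\<^esub>"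
  shows "ring B"
  using ring.ring_iso_imp_img_ring[OF assms(1,2)] assms(3) by simp

lemma is_mathieu_subspace_vimage:
  fixes A (structure)
  assumes f: "ring_hom_ring A B f"
    and phi: "\<And>r. r \<in> carrier R \<Longrightarrow> phi r \<in> carrier A"
    and f_phi: "\<And>r. r \<in> carrier R \<Longrightarrow> f (phi r) = psi r"
    and M: "is_mathieu_subspace R B psi M"
  shows "is_mathieu_subspace R A phi (carrier A \<inter> f -` M)"
proof -
  interpret ring_hom_ring A B f by (rule f)
  have sub: "is_submodule R B psi M" and mathieu:
    "\<And>a b c. \<lbrakk> a \<in> carrier B; \<forall>m::nat. m \<ge> 1 \<longrightarrow> a [^]\<^bsub>B\<^esub> m \<in> M; b \<in> carrier B; c \<in> carrier B \<rbrakk>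
       \<Longrightarrow> \<exists>N::nat. \<forall>m\<ge>N. b \<otimes>\<^bsub>B\<^esub> (a [^]\<^bsub>B\<^esub> m) \<otimes>\<^bsub>B\<^esub> c \<in> M"
    using M unfolding is_mathieu_subspace_def by blast+
  have "is_submodule R A phi (carrier A \<inter> f -` M)"
    using sub phi f_phi unfolding is_submodule_def by auto
  moreover have "\<exists>N::nat. \<forall>m\<ge>N. b \<otimes> (a [^] m) \<otimes> c \<in> carrier A \<inter> f -` M"
    if "a \<in> carrier A" "\<forall>m::nat. m \<ge> 1 \<longrightarrow> a [^] m \<in> carrier A \<inter> f -` M"
      "b \<in> carrier A" "c \<in> carrier A" for a b c
    using mathieu[of "f a" "f b" "f c"] that by (simp add: hom_nat_pow)
  ultimately show ?thesis unfolding is_mathieu_subspace_def by blast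
qed

lemma strongly_simple_ring_iso:
  assumes A: "ring A" and B: "ring B" and f: "f \<in> ring_iso A B"
    and phi: "\<And>r. r \<in> carrier R \<Longrightarrow> phi r \<in> carrier A"
    and f_phi: "\<And>r. r \<in> carrier R \<Longrightarrow> f (phi r) = psi r"
    and ss: "strongly_simple R A phi"
  shows "strongly_simple R B psi"
  unfolding strongly_simple_def
proof (intro allI impI)
  fix M assume M: "is_mathieu_subspace R B psi M"
  interpret ring_hom_ring A B f
    using A B f by (simp add: ring_hom_ringI2 ring_iso_def)
  have "is_mathieu_subspace R A phi (carrier A \<inter> f -` M)"
    using is_mathieu_subspace_vimage[OF ring_hom_ring_axioms phi f_phi M] .
  then have "carrier A \<inter> f -` M = {\<zero>\<^bsub>A\<^esub>} \<or> carrier A \<inter> f -` M = carrier A"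
    using ss unfolding strongly_simple_def by blast
  moreover have surj: "carrier B = f ` carrier A"
    using ring_iso_memE(5)[OF f] by (simp add: bij_betw_def)
  moreover have "M = f ` (carrier A \<inter> f -` M)"
    using M surj unfolding is_mathieu_subspace_def is_submodule_def by auto
  ultimately show "M = {\<zero>\<^bsub>B\<^esub>} \<or> M = carrier B"
    by force
qed

lemma strongly_simple_ring_iso_iff:
  assumes A: "ring A" and B: "ring B" and f: "f \<in> ring_iso A B"
    and phi: "\<And>r. r \<in> carrier R \<Longrightarrow> phi r \<in> carrier A"
    and f_phi: "\<And>r. r \<in> carrier R \<Longrightarrow> f (phi r) = psi r"
  shows "strongly_simple R A phi \<longleftrightarrow> strongly_simple R B psi"
proof
  show "strongly_simple R A phi \<Longrightarrow> strongly_simple R B psi"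
    by (rule strongly_simple_ring_iso[OF A B f phi f_phi])
next
  have inj: "inj_on f (carrier A)"
    using ring_iso_memE(5)[OF f] by (simp add: bij_betw_def)
  show "strongly_simple R B psi \<Longrightarrow> strongly_simple R A phi"
  proof (rule strongly_simple_ring_iso[OF B A ring_iso_set_sym[OF A f]])
    show "psi r \<in> carrier B" and "inv_into (carrier A) f (psi r) = phi r" if "r \<in> carrier R" for r
      using that phi f_phi ring_iso_memE(1)[OF f] inv_into_f_f[OF inj] by metis+
  qed
qed

section \<open>Fraction classes\<close>

lemma (in domain) frac_class_eq_iff:
  assumes "r \<in> carrier R" "s \<in> carrier R" "s \<noteq> \<zero>"
    and "r' \<in> carrier R" "s' \<in> carrier R" "s' \<noteq> \<zero>"
  shows "frac_class R (r, s) = frac_class R (r', s') \<longleftrightarrow> r \<otimes> s' = r' \<otimes> s"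
proof
  assume eq: "frac_class R (r, s) = frac_class R (r', s')"
  have "(r', s') \<in> frac_class R (r', s')"
    using assms by (simp add: frac_class_def m_comm)
  then have "(r', s') \<in> frac_class R (r, s)"
    using eq by simp
  then show "r \<otimes> s' = r' \<otimes> s"
    by (simp add: frac_class_def)
next
  have cross: "a' \<otimes> d = c \<otimes> b'"
    if carr: "a \<in> carrier R" "b \<in> carrier R" "b \<noteq> \<zero>" "a' \<in> carrier R" "b' \<in> carrier R"
      "c \<in> carrier R" "d \<in> carrier R"
      and eq1: "a \<otimes> b' = a' \<otimes> b" and eq2: "a \<otimes> d = c \<otimes> b"
    for a b a' b' c d
  proof -
    have "b \<otimes> (a' \<otimes> d) = (a' \<otimes> b) \<otimes> d"
      using carr by (simp add: m_ac)
    also have "\<dots> = (a \<otimes> d) \<otimes> b'"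
      unfolding eq1[symmetric] using carr by (simp add: m_ac)
    also have "\<dots> = b \<otimes> (c \<otimes> b')"
      unfolding eq2 using carr by (simp add: m_ac)
    finally show ?thesis
      using m_lcancel carr by simp
  qed
  assume eq: "r \<otimes> s' = r' \<otimes> s"
  have "r \<otimes> d = c \<otimes> s \<longleftrightarrow> r' \<otimes> d = c \<otimes> s'" if "c \<in> carrier R" "d \<in> carrier R" for c d
    using cross[OF assms(1-5) that eq] cross[OF assms(4-6,1,2) that eq[symmetric]] by blast
  then show "frac_class R (r, s) = frac_class R (r', s')"
    unfolding frac_class_def by auto
qed

lemma (in domain) frac_class_self:
  "r \<in> carrier R \<Longrightarrow> s \<in> carrier R \<Longrightarrow> s \<noteq> \<zero> \<Longrightarrow> (r, s) \<in> frac_class R (r, s)"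
  by (simp add: frac_class_def m_comm)

lemma (in domain) frac_mult_class:
  assumes r: "r \<in> carrier R" "s \<in> carrier R" "s \<noteq> \<zero>"
    and r': "r' \<in> carrier R" "s' \<in> carrier R" "s' \<noteq> \<zero>"
  shows "frac_mult R (frac_class R (r, s)) (frac_class R (r', s')) = frac_class R (r \<otimes> r', s \<otimes> s')"
  unfolding frac_mult_def
proof (rule SUP_eq_const)
  show "frac_class R (r, s) \<times> frac_class R (r', s') \<noteq> {}"
    using frac_class_self r r' by blast
next
  fix p assume "p \<in> frac_class R (r, s) \<times> frac_class R (r', s')"
  then obtain a b c d where p: "p = ((a, b), (c, d))"
    and ab: "a \<in> carrier R" "b \<in> carrier R" "b \<noteq> \<zero>" "r \<otimes> b = a \<otimes> s"
    and cd: "c \<in> carrier R" "d \<in> carrier R" "d \<noteq> \<zero>" "r' \<otimes> d = c \<otimes> s'"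
    unfolding frac_class_def by auto
  have "a \<otimes> c \<otimes> (s \<otimes> s') = (a \<otimes> s) \<otimes> (c \<otimes> s')"
    using ab(1,2) cd(1,2) r(1,2) r'(1,2) by (simp add: m_ac)
  also have "\<dots> = r \<otimes> r' \<otimes> (b \<otimes> d)"
    unfolding ab(4)[symmetric] cd(4)[symmetric] using ab(1,2) cd(1,2) r(1,2) r'(1,2) by (simp add: m_ac)
  finally have "frac_class R (a \<otimes> c, b \<otimes> d) = frac_class R (r \<otimes> r', s \<otimes> s')"
    using ab cd r r' by (simp add: frac_class_eq_iff integral_iff)
  then show "(\<lambda>((a, b), (c, d)). frac_class R (a \<otimes> c, b \<otimes> d)) p = frac_class R (r \<otimes> r', s \<otimes> s')"
    unfolding p by simp
qed

lemma (in domain) frac_add_class: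
  assumes r: "r \<in> carrier R" "s \<in> carrier R" "s \<noteq> \<zero>"
    and r': "r' \<in> carrier R" "s' \<in> carrier R" "s' \<noteq> \<zero>"
  shows "frac_add R (frac_class R (r, s)) (frac_class R (r', s'))
    = frac_class R (r \<otimes> s' \<oplus> r' \<otimes> s, s \<otimes> s')"
  unfolding frac_add_def
proof (rule SUP_eq_const)
  show "frac_class R (r, s) \<times> frac_class R (r', s') \<noteq> {}"
    using frac_class_self r r' by blast
next
  fix p assume "p \<in> frac_class R (r, s) \<times> frac_class R (r', s')"
  then obtain a b c d where p: "p = ((a, b), (c, d))"
    and ab: "a \<in> carrier R" "b \<in> carrier R" "b \<noteq> \<zero>" "r \<otimes> b = a \<otimes> s"
    and cd: "c \<in> carrier R" "d \<in> carrier R" "d \<noteq> \<zero>" "r' \<otimes> d = c \<otimes> s'"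
    unfolding frac_class_def by auto
  have "(a \<otimes> d \<oplus> c \<otimes> b) \<otimes> (s \<otimes> s') = (a \<otimes> s) \<otimes> (d \<otimes> s') \<oplus> (c \<otimes> s') \<otimes> (b \<otimes> s)"
    using ab(1,2) cd(1,2) r(1,2) r'(1,2) by (simp add: l_distr r_distr m_ac)
  also have "\<dots> = (r \<otimes> s' \<oplus> r' \<otimes> s) \<otimes> (b \<otimes> d)"
    unfolding ab(4)[symmetric] cd(4)[symmetric] using ab(1,2) cd(1,2) r(1,2) r'(1,2) by (simp add: l_distr r_distr m_ac)
  finally have "frac_class R (a \<otimes> d \<oplus> c \<otimes> b, b \<otimes> d) = frac_class R (r \<otimes> s' \<oplus> r' \<otimes> s, s \<otimes> s')"
    using ab cd r r' by (simp add: frac_class_eq_iff integral_iff)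
  then show "(\<lambda>((a, b), (c, d)). frac_class R (a \<otimes> d \<oplus> c \<otimes> b, b \<otimes> d)) p
      = frac_class R (r \<otimes> s' \<oplus> r' \<otimes> s, s \<otimes> s')"
    unfolding p by simp
qed

section \<open>Algebras with injective structure map\<close>

text \<open>\<open>frac_rep R A phi x (r, s)\<close> says that \<open>x = r/s\<close>, and \<open>frac_multiples R A phi x\<close> is
  \<open>K\<^sub>R x \<inter> A\<close>.\<close>

definition frac_rep :: "('r, 'm) ring_scheme \<Rightarrow> ('a, 'n) ring_scheme \<Rightarrow> ('r \<Rightarrow> 'a) \<Rightarrow> 'a \<Rightarrow> 'r \<times> 'r \<Rightarrow> bool" where
  "frac_rep R A phi x = (\<lambda>(r, s). r \<in> carrier R \<and> s \<in> carrier R \<and> s \<noteq> \<zero>\<^bsub>R\<^esub> \<and> phi s \<otimes>\<^bsub>A\<^esub> x = phi r)"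

definition to_frac :: "('r, 'm) ring_scheme \<Rightarrow> ('a, 'n) ring_scheme \<Rightarrow> ('r \<Rightarrow> 'a) \<Rightarrow> 'a \<Rightarrow> ('r \<times> 'r) set" where
  "to_frac R A phi x = frac_class R (SOME p. frac_rep R A phi x p)"

definition frac_multiples :: "('r, 'm) ring_scheme \<Rightarrow> ('a, 'n) ring_scheme \<Rightarrow> ('r \<Rightarrow> 'a) \<Rightarrow> 'a \<Rightarrow> 'a set" where
  "frac_multiples R A phi x = {w \<in> carrier A. \<exists>r\<in>carrier R. \<exists>s\<in>carrier R - {\<zero>\<^bsub>R\<^esub>}. phi s \<otimes>\<^bsub>A\<^esub> w = phi r \<otimes>\<^bsub>A\<^esub> x}"

locale faithful_algebra =
  fixes R :: "('r, 'm) ring_scheme" and A :: "('a, 'n) ring_scheme" (structure)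
    and phi :: "'r \<Rightarrow> 'a"
  assumes algebra: "is_algebra R A phi"
    and inj_phi: "inj_on phi (carrier R)"

sublocale faithful_algebra \<subseteq> ring A
  using algebra by (simp add: is_algebra_def)

sublocale faithful_algebra \<subseteq> R: cring R
  using algebra by (simp add: is_algebra_def)

sublocale faithful_algebra \<subseteq> phi: ring_hom_ring R A phi
  using algebra by (simp add: is_algebra_def ring_hom_ringI2 R.ring_axioms ring_axioms)

context faithful_algebra
begin

lemma phi_central: "r \<in> carrier R \<Longrightarrow> x \<in> carrier A \<Longrightarrow> phi r \<otimes> x = x \<otimes> phi r"
  using algebra by (simp add: is_algebra_def)

lemma phi_eq_zero_iff: "r \<in> carrier R \<Longrightarrow> phi r = \<zero> \<longleftrightarrow> r = \<zero>\<^bsub>R\<^esub>"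
  using inj_phi phi.hom_zero by (metis R.zero_closed inj_onD)

lemma phi_smult_smult:
  "r \<in> carrier R \<Longrightarrow> t \<in> carrier R \<Longrightarrow> x \<in> carrier A \<Longrightarrow> phi r \<otimes> (phi t \<otimes> x) = phi (r \<otimes>\<^bsub>R\<^esub> t) \<otimes> x"
  by (simp add: m_assoc)

lemma phi_smult_mult:
  assumes "r \<in> carrier R" "t \<in> carrier R" "x \<in> carrier A" "y \<in> carrier A"
  shows "(phi r \<otimes> x) \<otimes> (phi t \<otimes> y) = phi (r \<otimes>\<^bsub>R\<^esub> t) \<otimes> (x \<otimes> y)"
proof -
  have "(phi r \<otimes> x) \<otimes> (phi t \<otimes> y) = phi r \<otimes> ((x \<otimes> phi t) \<otimes> y)"
    using assms by (simp add: m_assoc)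
  also have "\<dots> = phi r \<otimes> ((phi t \<otimes> x) \<otimes> y)"
    using assms by (simp add: phi_central)
  also have "\<dots> = phi (r \<otimes>\<^bsub>R\<^esub> t) \<otimes> (x \<otimes> y)"
    using assms by (simp add: m_assoc)
  finally show ?thesis .
qed

lemma submodule_left_multiples:
  assumes c: "c \<in> carrier A"
  shows "is_submodule R A phi ((\<lambda>w. c \<otimes> w) ` carrier A)"
  unfolding is_submodule_def
proof (intro conjI ballI)
  show "(\<lambda>w. c \<otimes> w) ` carrier A \<subseteq> carrier A" and "\<zero> \<in> (\<lambda>w. c \<otimes> w) ` carrier A"
    using c by (auto intro!: image_eqI[of _ _ \<zero>])
next
  fix x y assume "x \<in> (\<lambda>w. c \<otimes> w) ` carrier A" "y \<in> (\<lambda>w. c \<otimes> w) ` carrier A"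
  then obtain u v where "u \<in> carrier A" "v \<in> carrier A" "x = c \<otimes> u" "y = c \<otimes> v"
    by auto
  then show "x \<oplus> y \<in> (\<lambda>w. c \<otimes> w) ` carrier A"
    using c by (intro image_eqI[of _ _ "u \<oplus> v"]) (auto simp: r_distr)
next
  fix r x assume r: "r \<in> carrier R" and "x \<in> (\<lambda>w. c \<otimes> w) ` carrier A"
  then obtain u where u: "u \<in> carrier A" "x = c \<otimes> u"
    by auto
  have "phi r \<otimes> x = (phi r \<otimes> c) \<otimes> u"
    using c r u by (simp add: m_assoc)
  also have "\<dots> = c \<otimes> (phi r \<otimes> u)"
    using c r u by (simp add: phi_central m_assoc)
  finally show "phi r \<otimes> x \<in> (\<lambda>w. c \<otimes> w) ` carrier A"
    using r u by auto
qed

lemma phi_smult_eq_rescale: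
  assumes eq: "phi s \<otimes> w = phi r \<otimes> x"
    and carr: "r \<in> carrier R" "s \<in> carrier R" "t \<in> carrier R" "w \<in> carrier A" "x \<in> carrier A"
  shows "phi (t \<otimes>\<^bsub>R\<^esub> s) \<otimes> w = phi (t \<otimes>\<^bsub>R\<^esub> r) \<otimes> x"
  using carr phi_smult_smult[of t s w] phi_smult_smult[of t r x] by (simp add: eq)

lemma submodule_cyclic:
  assumes x: "x \<in> carrier A"
  shows "is_submodule R A phi ((\<lambda>r. phi r \<otimes> x) ` carrier R)"
  unfolding is_submodule_def
proof (intro conjI ballI)
  show "(\<lambda>r. phi r \<otimes> x) ` carrier R \<subseteq> carrier A"
    using x by auto
  show "\<zero> \<in> (\<lambda>r. phi r \<otimes> x) ` carrier R"
    using x by (auto intro!: image_eqI[of _ _ "\<zero>\<^bsub>R\<^esub>"])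
next
  fix u v assume "u \<in> (\<lambda>r. phi r \<otimes> x) ` carrier R" "v \<in> (\<lambda>r. phi r \<otimes> x) ` carrier R"
  then obtain r s where "r \<in> carrier R" "s \<in> carrier R" "u = phi r \<otimes> x" "v = phi s \<otimes> x"
    by auto
  then show "u \<oplus> v \<in> (\<lambda>r. phi r \<otimes> x) ` carrier R"
    using x by (auto simp: l_distr intro!: image_eqI[of _ _ "r \<oplus>\<^bsub>R\<^esub> s"])
next
  fix t u assume t: "t \<in> carrier R" and "u \<in> (\<lambda>r. phi r \<otimes> x) ` carrier R"
  then obtain r where "r \<in> carrier R" "u = phi r \<otimes> x"
    by auto
  then show "phi t \<otimes> u \<in> (\<lambda>r. phi r \<otimes> x) ` carrier R"
    using t x by (auto simp: phi_smult_smult intro!: image_eqI[of _ _ "t \<otimes>\<^bsub>R\<^esub> r"])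
qed

lemma self_in_frac_multiples: "domain R \<Longrightarrow> x \<in> carrier A \<Longrightarrow> x \<in> frac_multiples R A phi x"
  unfolding frac_multiples_def by (auto intro!: bexI[of _ "\<one>\<^bsub>R\<^esub>"] simp: domain.one_not_zero)

lemma submodule_frac_multiples:
  assumes R: "domain R" and x: "x \<in> carrier A"
  shows "is_submodule R A phi (frac_multiples R A phi x)"
  unfolding is_submodule_def
proof (intro conjI ballI)
  show "frac_multiples R A phi x \<subseteq> carrier A"
    by (auto simp: frac_multiples_def)
  have "phi \<one>\<^bsub>R\<^esub> \<otimes> \<zero> = phi \<zero>\<^bsub>R\<^esub> \<otimes> x"
    using x by simp
  then show "\<zero> \<in> frac_multiples R A phi x"
    unfolding frac_multiples_def using domain.one_not_zero[OF R] by blast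
next
  fix w w' assume "w \<in> frac_multiples R A phi x" "w' \<in> frac_multiples R A phi x"
  then obtain r s r' s' where w: "w \<in> carrier A" "r \<in> carrier R" "s \<in> carrier R" "s \<noteq> \<zero>\<^bsub>R\<^esub>"
      "phi s \<otimes> w = phi r \<otimes> x"
    and w': "w' \<in> carrier A" "r' \<in> carrier R" "s' \<in> carrier R" "s' \<noteq> \<zero>\<^bsub>R\<^esub>"
      "phi s' \<otimes> w' = phi r' \<otimes> x"
    unfolding frac_multiples_def by auto
  have "phi (s \<otimes>\<^bsub>R\<^esub> s') \<otimes> (w \<oplus> w') = phi (s' \<otimes>\<^bsub>R\<^esub> s) \<otimes> w \<oplus> phi (s \<otimes>\<^bsub>R\<^esub> s') \<otimes> w'"
    using w(1-3) w'(1-3) by (simp add: r_distr R.m_comm[of s' s])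
  also have "\<dots> = phi (s' \<otimes>\<^bsub>R\<^esub> r) \<otimes> x \<oplus> phi (s \<otimes>\<^bsub>R\<^esub> r') \<otimes> x"
    using phi_smult_eq_rescale[OF w(5)] phi_smult_eq_rescale[OF w'(5)] w w' x by simp
  also have "\<dots> = phi (s' \<otimes>\<^bsub>R\<^esub> r \<oplus>\<^bsub>R\<^esub> s \<otimes>\<^bsub>R\<^esub> r') \<otimes> x"
    using w(1-3) w'(1-3) x by (simp add: l_distr)
  finally have "phi (s \<otimes>\<^bsub>R\<^esub> s') \<otimes> (w \<oplus> w') = phi (s' \<otimes>\<^bsub>R\<^esub> r \<oplus>\<^bsub>R\<^esub> s \<otimes>\<^bsub>R\<^esub> r') \<otimes> x" .
  moreover have "s \<otimes>\<^bsub>R\<^esub> s' \<in> carrier R - {\<zero>\<^bsub>R\<^esub>}" "s' \<otimes>\<^bsub>R\<^esub> r \<oplus>\<^bsub>R\<^esub> s \<otimes>\<^bsub>R\<^esub> r' \<in> carrier R"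
    using w w' by (simp_all add: domain.integral_iff[OF R])
  moreover have "w \<oplus> w' \<in> carrier A"
    using w w' by simp
  ultimately show "w \<oplus> w' \<in> frac_multiples R A phi x"
    unfolding frac_multiples_def by blast
next
  fix t w assume t: "t \<in> carrier R" and "w \<in> frac_multiples R A phi x"
  then obtain r s where w: "w \<in> carrier A" "r \<in> carrier R" "s \<in> carrier R" "s \<noteq> \<zero>\<^bsub>R\<^esub>"
      "phi s \<otimes> w = phi r \<otimes> x"
    unfolding frac_multiples_def by auto
  have "phi s \<otimes> (phi t \<otimes> w) = phi (s \<otimes>\<^bsub>R\<^esub> t) \<otimes> w"
    using t w by (simp add: phi_smult_smult)
  also have "\<dots> = phi (t \<otimes>\<^bsub>R\<^esub> r) \<otimes> x"
    using phi_smult_eq_rescale[OF w(5) w(2,3) t w(1) x] by (simp only: R.m_comm[OF w(3) t])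
  finally have "phi s \<otimes> (phi t \<otimes> w) = phi (t \<otimes>\<^bsub>R\<^esub> r) \<otimes> x" .
  moreover have "phi t \<otimes> w \<in> carrier A" "t \<otimes>\<^bsub>R\<^esub> r \<in> carrier R"
    using t w by simp_all
  ultimately show "phi t \<otimes> w \<in> frac_multiples R A phi x"
    using w(3,4) unfolding frac_multiples_def by blast
qed

lemma square_relation_of_multiples:
  assumes a: "a \<in> carrier A" and x: "x \<in> carrier A"
    and rs: "r \<in> carrier R" "s \<in> carrier R" "phi s \<otimes> a = phi r \<otimes> x"
    and rs2: "r2 \<in> carrier R" "s2 \<in> carrier R" "phi s2 \<otimes> (a \<otimes> a) = phi r2 \<otimes> x"
  shows "phi (s2 \<otimes>\<^bsub>R\<^esub> (r \<otimes>\<^bsub>R\<^esub> r)) \<otimes> (x \<otimes> x) = phi (s \<otimes>\<^bsub>R\<^esub> s \<otimes>\<^bsub>R\<^esub> r2) \<otimes> x"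
proof -
  have "phi (s2 \<otimes>\<^bsub>R\<^esub> (r \<otimes>\<^bsub>R\<^esub> r)) \<otimes> (x \<otimes> x) = phi s2 \<otimes> ((phi r \<otimes> x) \<otimes> (phi r \<otimes> x))"
    using rs rs2 x phi_smult_mult[of r r x x] by (simp add: m_assoc)
  also have "\<dots> = phi s2 \<otimes> ((phi s \<otimes> a) \<otimes> (phi s \<otimes> a))"
    by (simp only: rs(3))
  also have "\<dots> = phi (s \<otimes>\<^bsub>R\<^esub> s) \<otimes> (phi s2 \<otimes> (a \<otimes> a))"
    using rs rs2 a phi_smult_mult[of s s a a] phi_smult_smult[of s2 "s \<otimes>\<^bsub>R\<^esub> s" "a \<otimes> a"]
      phi_smult_smult[of "s \<otimes>\<^bsub>R\<^esub> s" s2 "a \<otimes> a"] R.m_comm[of s2 "s \<otimes>\<^bsub>R\<^esub> s"]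
    by simp
  also have "\<dots> = phi (s \<otimes>\<^bsub>R\<^esub> s \<otimes>\<^bsub>R\<^esub> r2) \<otimes> x"
    using rs rs2 x by (simp add: m_assoc)
  finally show ?thesis .
qed

lemma frac_rep_phi: "domain R \<Longrightarrow> r \<in> carrier R \<Longrightarrow> frac_rep R A phi (phi r) (r, \<one>\<^bsub>R\<^esub>)"
  by (simp add: frac_rep_def domain.one_not_zero)

lemma frac_rep_scale:
  assumes "x \<in> carrier A" "frac_rep R A phi x (r, s)" "t \<in> carrier R"
  shows "phi (t \<otimes>\<^bsub>R\<^esub> s) \<otimes> x = phi (t \<otimes>\<^bsub>R\<^esub> r)"
  using assms phi_smult_smult[of t s x] by (simp add: frac_rep_def)

lemma frac_rep_mult:
  assumes R: "domain R" and x: "x \<in> carrier A" "frac_rep R A phi x (r, s)"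
    and y: "y \<in> carrier A" "frac_rep R A phi y (r', s')"
  shows "frac_rep R A phi (x \<otimes> y) (r \<otimes>\<^bsub>R\<^esub> r', s \<otimes>\<^bsub>R\<^esub> s')"
  using x y phi_smult_mult[of s s' x y] by (simp add: frac_rep_def domain.integral_iff[OF R])

lemma frac_rep_add:
  assumes R: "domain R" and x: "x \<in> carrier A" "frac_rep R A phi x (r, s)"
    and y: "y \<in> carrier A" "frac_rep R A phi y (r', s')"
  shows "frac_rep R A phi (x \<oplus> y) (r \<otimes>\<^bsub>R\<^esub> s' \<oplus>\<^bsub>R\<^esub> r' \<otimes>\<^bsub>R\<^esub> s, s \<otimes>\<^bsub>R\<^esub> s')"
proof -
  have rs: "r \<in> carrier R" "s \<in> carrier R" "r' \<in> carrier R" "s' \<in> carrier R"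
    using x y by (simp_all add: frac_rep_def)
  have "phi (s \<otimes>\<^bsub>R\<^esub> s') \<otimes> (x \<oplus> y) = phi (s' \<otimes>\<^bsub>R\<^esub> s) \<otimes> x \<oplus> phi (s \<otimes>\<^bsub>R\<^esub> s') \<otimes> y"
    using rs x y by (simp add: r_distr R.m_comm[of s s'])
  also have "\<dots> = phi (r \<otimes>\<^bsub>R\<^esub> s' \<oplus>\<^bsub>R\<^esub> r' \<otimes>\<^bsub>R\<^esub> s)"
    using rs frac_rep_scale[OF x, of s'] frac_rep_scale[OF y, of s] by (simp add: R.m_comm)
  finally show ?thesis
    using rs x y by (simp add: frac_rep_def domain.integral_iff[OF R])
qed

lemma frac_rep_of_trivial_frac_multiples:
  assumes R: "domain R" and x: "x \<in> carrier A"
    and trivial: "frac_multiples R A phi x = {\<zero>} \<or> frac_multiples R A phi x = carrier A"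
  shows "\<exists>p. frac_rep R A phi x p"
  using trivial
proof
  assume "frac_multiples R A phi x = {\<zero>}"
  then have "x = \<zero>"
    using self_in_frac_multiples[OF R x] by simp
  then show ?thesis
    using frac_rep_phi[OF R, of "\<zero>\<^bsub>R\<^esub>"] by auto
next
  assume "frac_multiples R A phi x = carrier A"
  then have "\<one> \<in> frac_multiples R A phi x"
    by simp
  then obtain r s where rs: "r \<in> carrier R" "s \<in> carrier R" "s \<noteq> \<zero>\<^bsub>R\<^esub>"
    and "phi s \<otimes> \<one> = phi r \<otimes> x"
    unfolding frac_multiples_def by blast
  then have eq: "phi r \<otimes> x = phi s"
    by simp
  have "r \<noteq> \<zero>\<^bsub>R\<^esub>"
  proof
    assume "r = \<zero>\<^bsub>R\<^esub>"
    then have "phi s = \<zero>"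
      using eq x by simp
    then show False
      using rs phi_eq_zero_iff by simp
  qed
  then have "frac_rep R A phi x (s, r)"
    using rs eq by (simp add: frac_rep_def)
  then show ?thesis ..
qed

lemma strongly_simple_iff_frac_field:
  assumes f: "f \<in> ring_iso A (frac_field R)" and f_phi: "\<And>r. r \<in> carrier R \<Longrightarrow> f (phi r) = frac_embed R r"
  shows "strongly_simple R A phi \<longleftrightarrow> strongly_simple R (frac_field R) (frac_embed R)"
proof (rule strongly_simple_ring_iso_iff[OF ring_axioms _ f _ f_phi])
  \<comment> \<open>The ring axioms of \<open>frac_field R\<close> are obtained from \<open>A\<close> through \<open>f\<close>.\<close>
  have "f \<zero> = \<zero>\<^bsub>frac_field R\<^esub>"
    using f_phi[of "\<zero>\<^bsub>R\<^esub>"] by (simp add: frac_embed_def frac_field_def)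
  then show "ring (frac_field R)"
    by (rule ring_iso_zero_imp_ring[OF ring_axioms f])
qed simp

end

section \<open>Algebras of fractions\<close>

locale algebra_of_fractions = faithful_algebra +
  assumes domain: "domain R"
    and phi_Units: "\<And>s. s \<in> carrier R \<Longrightarrow> s \<noteq> \<zero>\<^bsub>R\<^esub> \<Longrightarrow> phi s \<in> Units A"
    and frac_rep_exists: "\<And>x. x \<in> carrier A \<Longrightarrow> \<exists>p. frac_rep R A phi x p"

sublocale algebra_of_fractions \<subseteq> R: domain R
  by (rule domain)

context algebra_of_fractions
begin

lemma frac_rep_eq_iff:
  assumes x: "x \<in> carrier A" "frac_rep R A phi x (r, s)"
    and y: "y \<in> carrier A" "frac_rep R A phi y (r', s')"
  shows "x = y \<longleftrightarrow> r \<otimes>\<^bsub>R\<^esub> s' = r' \<otimes>\<^bsub>R\<^esub> s"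
proof -
  have rs: "r \<in> carrier R" "s \<in> carrier R" "s \<noteq> \<zero>\<^bsub>R\<^esub>" "r' \<in> carrier R" "s' \<in> carrier R" "s' \<noteq> \<zero>\<^bsub>R\<^esub>"
    using x y by (simp_all add: frac_rep_def)
  have "x = y \<longleftrightarrow> phi (s' \<otimes>\<^bsub>R\<^esub> s) \<otimes> x = phi (s' \<otimes>\<^bsub>R\<^esub> s) \<otimes> y"
    using phi_Units rs x y by (simp add: R.integral_iff)
  also have "\<dots> \<longleftrightarrow> phi (r \<otimes>\<^bsub>R\<^esub> s') = phi (r' \<otimes>\<^bsub>R\<^esub> s)"
    using frac_rep_scale[OF x, of s'] frac_rep_scale[OF y, of s] rs by (simp add: R.m_comm)
  also have "\<dots> \<longleftrightarrow> r \<otimes>\<^bsub>R\<^esub> s' = r' \<otimes>\<^bsub>R\<^esub> s"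
    using rs by (intro inj_on_eq_iff[OF inj_phi]) simp_all
  finally show ?thesis .
qed

lemma to_frac_eq:
  assumes x: "x \<in> carrier A" "frac_rep R A phi x (r, s)"
  shows "to_frac R A phi x = frac_class R (r, s)"
proof -
  obtain r' s' where rs': "(SOME p. frac_rep R A phi x p) = (r', s')" and x': "frac_rep R A phi x (r', s')"
    using someI[of "frac_rep R A phi x" "(r, s)"] x(2) by (metis surj_pair)
  have "r' \<otimes>\<^bsub>R\<^esub> s = r \<otimes>\<^bsub>R\<^esub> s'"
    using frac_rep_eq_iff[OF x(1) x' x] by simp
  then show ?thesis
    unfolding to_frac_def rs' using x x' by (simp add: R.frac_class_eq_iff frac_rep_def)
qed

lemma frac_repE:
  assumes "x \<in> carrier A"
  obtains r s where "frac_rep R A phi x (r, s)"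
  using frac_rep_exists[OF assms] by auto

lemma frac_rep_inv:
  assumes "r \<in> carrier R" "s \<in> carrier R" "s \<noteq> \<zero>\<^bsub>R\<^esub>"
  shows "frac_rep R A phi (inv (phi s) \<otimes> phi r) (r, s)"
  using assms phi_Units[of s] by (simp add: frac_rep_def m_assoc[symmetric])

lemma to_frac_phi: "r \<in> carrier R \<Longrightarrow> to_frac R A phi (phi r) = frac_embed R r"
  by (simp add: to_frac_eq frac_rep_phi domain frac_embed_def)

lemma to_frac_closed: "x \<in> carrier A \<Longrightarrow> to_frac R A phi x \<in> carrier (frac_field R)"
  by (rule frac_repE) (auto simp: to_frac_eq frac_rep_def frac_field_def)

lemma to_frac_mult:
  assumes x: "x \<in> carrier A" and y: "y \<in> carrier A"
  shows "to_frac R A phi (x \<otimes> y) = to_frac R A phi x \<otimes>\<^bsub>frac_field R\<^esub> to_frac R A phi y"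
proof -
  obtain r s r' s' where x': "frac_rep R A phi x (r, s)" and y': "frac_rep R A phi y (r', s')"
    using frac_repE x y by metis
  have "to_frac R A phi (x \<otimes> y) = frac_class R (r \<otimes>\<^bsub>R\<^esub> r', s \<otimes>\<^bsub>R\<^esub> s')"
    using frac_rep_mult[OF domain x x' y y'] x y by (simp add: to_frac_eq)
  also have "\<dots> = frac_mult R (frac_class R (r, s)) (frac_class R (r', s'))"
    using x' y' by (simp add: R.frac_mult_class frac_rep_def)
  finally show ?thesis
    using x x' y y' by (simp add: to_frac_eq frac_field_def)
qed

lemma to_frac_add:
  assumes x: "x \<in> carrier A" and y: "y \<in> carrier A"
  shows "to_frac R A phi (x \<oplus> y) = to_frac R A phi x \<oplus>\<^bsub>frac_field R\<^esub> to_frac R A phi y"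
proof -
  obtain r s r' s' where x': "frac_rep R A phi x (r, s)" and y': "frac_rep R A phi y (r', s')"
    using frac_repE x y by metis
  have "to_frac R A phi (x \<oplus> y) = frac_class R (r \<otimes>\<^bsub>R\<^esub> s' \<oplus>\<^bsub>R\<^esub> r' \<otimes>\<^bsub>R\<^esub> s, s \<otimes>\<^bsub>R\<^esub> s')"
    using frac_rep_add[OF domain x x' y y'] x y by (simp add: to_frac_eq)
  also have "\<dots> = frac_add R (frac_class R (r, s)) (frac_class R (r', s'))"
    using x' y' by (simp add: R.frac_add_class frac_rep_def)
  finally show ?thesis
    using x x' y y' by (simp add: to_frac_eq frac_field_def)
qed

lemma inj_on_to_frac: "inj_on (to_frac R A phi) (carrier A)"
proof (rule inj_onI)
  fix x y assume x: "x \<in> carrier A" and y: "y \<in> carrier A"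
    and eq: "to_frac R A phi x = to_frac R A phi y"
  obtain r s r' s' where "frac_rep R A phi x (r, s)" "frac_rep R A phi y (r', s')"
    using frac_repE x y by metis
  then show "x = y"
    using eq x y by (simp add: to_frac_eq frac_rep_eq_iff R.frac_class_eq_iff frac_rep_def)
qed

lemma to_frac_image: "to_frac R A phi ` carrier A = carrier (frac_field R)"
proof
  show "carrier (frac_field R) \<subseteq> to_frac R A phi ` carrier A"
  proof
    fix k assume "k \<in> carrier (frac_field R)"
    then obtain r s where rs: "r \<in> carrier R" "s \<in> carrier R" "s \<noteq> \<zero>\<^bsub>R\<^esub>"
      and k: "k = frac_class R (r, s)"
      by (auto simp: frac_field_def)
    have "inv (phi s) \<otimes> phi r \<in> carrier A"
      using rs phi_Units by simp
    then show "k \<in> to_frac R A phi ` carrier A"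
      using to_frac_eq frac_rep_inv[OF rs] k by (metis image_eqI)
  qed
qed (use to_frac_closed in blast)

lemma to_frac_ring_iso: "to_frac R A phi \<in> ring_iso A (frac_field R)"
proof -
  have "to_frac R A phi \<one> = \<one>\<^bsub>frac_field R\<^esub>"
    using to_frac_phi[of "\<one>\<^bsub>R\<^esub>"] by (simp add: frac_embed_def frac_field_def)
  then show ?thesis
    unfolding ring_iso_def ring_hom_def bij_betw_def
    using to_frac_closed to_frac_mult to_frac_add inj_on_to_frac to_frac_image by auto
qed

end

section \<open>Strongly simple algebras\<close>

lemma (in monoid) Units_inv_central:
  assumes u: "u \<in> Units G" and central: "\<And>w. w \<in> carrier G \<Longrightarrow> u \<otimes> w = w \<otimes> u"
    and w: "w \<in> carrier G"
  shows "inv u \<otimes> w = w \<otimes> inv u"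
proof -
  have uc: "u \<in> carrier G" "inv u \<in> carrier G"
    using u by auto
  have "inv u \<otimes> w = inv u \<otimes> w \<otimes> (u \<otimes> inv u)"
    using u w by simp
  also have "\<dots> = inv u \<otimes> (w \<otimes> u) \<otimes> inv u"
    using uc w by (simp add: m_assoc)
  also have "\<dots> = inv u \<otimes> (u \<otimes> w) \<otimes> inv u"
    using w by (simp add: central)
  also have "\<dots> = w \<otimes> inv u"
    using u uc w by (simp add: m_assoc[symmetric])
  finally show ?thesis .
qed

lemma (in monoid) idempotent_of_quadratic:
  assumes c: "c \<in> Units G" and central: "\<And>w. w \<in> carrier G \<Longrightarrow> c \<otimes> w = w \<otimes> c"
    and z: "z \<in> carrier G" and quadratic: "z \<otimes> z = c \<otimes> z"
  shows "(inv c \<otimes> z) \<otimes> (inv c \<otimes> z) = inv c \<otimes> z"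
proof -
  have cc: "c \<in> carrier G" "inv c \<in> carrier G"
    using c by auto
  have "(inv c \<otimes> z) \<otimes> (inv c \<otimes> z) = inv c \<otimes> (z \<otimes> inv c) \<otimes> z"
    using cc z by (simp add: m_assoc)
  also have "\<dots> = inv c \<otimes> (inv c \<otimes> z) \<otimes> z"
    using Units_inv_central[OF c central z] by simp
  also have "\<dots> = inv c \<otimes> inv c \<otimes> (c \<otimes> z)"
    using cc z by (simp add: m_assoc quadratic)
  also have "\<dots> = inv c \<otimes> (inv c \<otimes> (c \<otimes> z))"
    using cc z by (simp add: m_assoc)
  also have "\<dots> = inv c \<otimes> z"
    using c cc z by (simp add: m_assoc[symmetric])
  finally show ?thesis .
qed

locale strongly_simple_algebra = faithful_algebra +
  assumes nontrivial: "\<one> \<noteq> \<zero>"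
    and strongly_simple: "strongly_simple R A phi"

context strongly_simple_algebra
begin

lemma ideal_submodule_trivial:
  assumes M: "is_submodule R A phi M"
    and ideal: "\<And>z b c. z \<in> M \<Longrightarrow> b \<in> carrier A \<Longrightarrow> c \<in> carrier A \<Longrightarrow> b \<otimes> z \<otimes> c \<in> M"
  shows "M = {\<zero>} \<or> M = carrier A"
proof -
  have "is_mathieu_subspace R A phi M"
    unfolding is_mathieu_subspace_def
  proof (intro conjI M ballI impI)
    fix a b c assume "a \<in> carrier A" "\<forall>m::nat. 1 \<le> m \<longrightarrow> a [^] m \<in> M" "b \<in> carrier A" "c \<in> carrier A"
    then show "\<exists>N. \<forall>m::nat\<ge>N. b \<otimes> a [^] m \<otimes> c \<in> M"
      by (intro exI[of _ 1] allI impI ideal) auto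
  qed
  then show ?thesis
    using strongly_simple unfolding strongly_simple_def by blast
qed

lemma square_zero_submodule_trivial:
  assumes M: "is_submodule R A phi M" and square_zero: "\<And>z. z \<in> M \<Longrightarrow> z \<otimes> z = \<zero>"
  shows "M = {\<zero>}"
proof -
  have "is_mathieu_subspace R A phi M"
    unfolding is_mathieu_subspace_def
  proof (intro conjI M ballI impI)
    fix a b c assume a: "a \<in> carrier A" and powers: "\<forall>m::nat. 1 \<le> m \<longrightarrow> a [^] m \<in> M"
      and bc: "b \<in> carrier A" "c \<in> carrier A"
    have "a \<in> M"
      using powers[rule_format, of 1] a by simp
    then have "a \<otimes> a = \<zero>"
      by (rule square_zero)
    have "a [^] m = \<zero>" if m: "m \<ge> 2" for m :: nat
    proof -
      obtain k where k: "m = Suc (Suc k)"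
        using le_Suc_ex[OF m] by (auto simp: numeral_2_eq_2)
      have "a [^] m = a [^] k \<otimes> (a \<otimes> a)"
        unfolding k using a by (simp only: nat_pow_Suc m_assoc nat_pow_closed)
      then show ?thesis
        using a \<open>a \<otimes> a = \<zero>\<close> by simp
    qed
    then show "\<exists>N. \<forall>m::nat\<ge>N. b \<otimes> a [^] m \<otimes> c \<in> M"
    proof (intro exI[of _ 2] allI impI)
      fix m :: nat assume "2 \<le> m"
      then show "b \<otimes> a [^] m \<otimes> c \<in> M"
        using M bc \<open>\<And>m. 2 \<le> m \<Longrightarrow> a [^] m = \<zero>\<close> unfolding is_submodule_def by simp
    qed
  qed
  moreover have "M \<noteq> carrier A"
    using square_zero[of \<one>] nontrivial by auto
  ultimately show ?thesis
    using strongly_simple unfolding strongly_simple_def by blast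
qed

lemma central_imp_Units:
  assumes c: "c \<in> carrier A" "c \<noteq> \<zero>" and central: "\<And>w. w \<in> carrier A \<Longrightarrow> c \<otimes> w = w \<otimes> c"
  shows "c \<in> Units A"
proof -
  let ?M = "(\<lambda>w. c \<otimes> w) ` carrier A"
  have "?M = {\<zero>} \<or> ?M = carrier A"
  proof (rule ideal_submodule_trivial[OF submodule_left_multiples[OF c(1)]])
    fix z b d assume "z \<in> ?M" and bd: "b \<in> carrier A" "d \<in> carrier A"
    then obtain w where w: "w \<in> carrier A" "z = c \<otimes> w"
      by auto
    have "b \<otimes> z \<otimes> d = (b \<otimes> c) \<otimes> w \<otimes> d"
      using bd c w by (simp add: m_assoc)
    also have "\<dots> = c \<otimes> (b \<otimes> w \<otimes> d)"
      using bd c w by (simp add: central[OF bd(1), symmetric] m_assoc)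
    finally show "b \<otimes> z \<otimes> d \<in> ?M"
      using bd w by auto
  qed
  moreover have "c \<in> ?M"
    using c by (auto intro!: image_eqI[of _ _ \<one>])
  ultimately have "\<one> \<in> ?M"
    using c by auto
  then obtain w where w: "w \<in> carrier A" "\<one> = c \<otimes> w"
    by auto
  then show ?thesis
    using c central[OF w(1)] unfolding Units_def by auto
qed

lemma phi_Units_nonzero:
  assumes "s \<in> carrier R" "s \<noteq> \<zero>\<^bsub>R\<^esub>"
  shows "phi s \<in> Units A"
proof (rule central_imp_Units)
  show "phi s \<in> carrier A" and "phi s \<noteq> \<zero>"
    using assms by (simp_all add: phi_eq_zero_iff)
  show "\<And>w. w \<in> carrier A \<Longrightarrow> phi s \<otimes> w = w \<otimes> phi s"
    using assms(1) by (rule phi_central)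
qed

lemma domain_R: "domain R"
proof
  show "\<one>\<^bsub>R\<^esub> \<noteq> \<zero>\<^bsub>R\<^esub>"
    using nontrivial by (metis phi.hom_one phi.hom_zero)
next
  fix a b assume ab: "a \<otimes>\<^bsub>R\<^esub> b = \<zero>\<^bsub>R\<^esub>" "a \<in> carrier R" "b \<in> carrier R"
  show "a = \<zero>\<^bsub>R\<^esub> \<or> b = \<zero>\<^bsub>R\<^esub>"
  proof (cases "a = \<zero>\<^bsub>R\<^esub>")
    case False
    then have "phi a \<in> Units A"
      using ab by (simp add: phi_Units_nonzero)
    moreover have "phi a \<otimes> phi b = \<zero>"
      using ab by (simp flip: phi.hom_mult)
    ultimately have "phi b = \<zero>"
      using Units_l_cancel[of "phi a" "phi b" \<zero>] ab by simp
    then show ?thesis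
      using ab phi_eq_zero_iff by simp
  qed simp
qed

lemma square_zero_imp_zero:
  assumes x: "x \<in> carrier A" and square_zero: "x \<otimes> x = \<zero>"
  shows "x = \<zero>"
proof -
  have "(\<lambda>r. phi r \<otimes> x) ` carrier R = {\<zero>}"
  proof (rule square_zero_submodule_trivial[OF submodule_cyclic[OF x]])
    fix z assume "z \<in> (\<lambda>r. phi r \<otimes> x) ` carrier R"
    then obtain r where "r \<in> carrier R" "z = phi r \<otimes> x"
      by auto
    then show "z \<otimes> z = \<zero>"
      using x phi_smult_mult[of r r x x] by (simp add: square_zero)
  qed
  moreover have "x \<in> (\<lambda>r. phi r \<otimes> x) ` carrier R"
    using x by (auto intro!: image_eqI[of _ _ "\<one>\<^bsub>R\<^esub>"])
  ultimately show ?thesis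
    by blast
qed

lemma idempotent_central:
  assumes y: "y \<in> carrier A" and idem: "y \<otimes> y = y" and w: "w \<in> carrier A"
  shows "y \<otimes> w = w \<otimes> y"
proof -
  define e where "e = \<one> \<ominus> y"
  have e: "e \<in> carrier A"
    using y by (simp add: e_def)
  have ey: "e \<otimes> y = \<zero>" and ye: "y \<otimes> e = \<zero>"
    using y idem by (simp_all add: e_def minus_eq l_distr r_distr l_minus r_minus r_neg)
  have "(y \<otimes> w \<otimes> e) \<otimes> (y \<otimes> w \<otimes> e) = y \<otimes> w \<otimes> (e \<otimes> y) \<otimes> w \<otimes> e"
    using y w e by (simp add: m_assoc)
  then have "(y \<otimes> w \<otimes> e) \<otimes> (y \<otimes> w \<otimes> e) = \<zero>"
    using y w e by (simp add: ey)
  then have "y \<otimes> w \<otimes> e = \<zero>"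
    by (rule square_zero_imp_zero[rotated]) (use y w e in simp)
  moreover have "y \<otimes> w \<otimes> e = y \<otimes> w \<ominus> y \<otimes> w \<otimes> y"
    using y w by (simp add: e_def minus_eq r_distr r_minus)
  ultimately have yw: "y \<otimes> w = y \<otimes> w \<otimes> y"
    using y w by (simp add: r_right_minus_eq)
  have "(e \<otimes> w \<otimes> y) \<otimes> (e \<otimes> w \<otimes> y) = e \<otimes> w \<otimes> (y \<otimes> e) \<otimes> w \<otimes> y"
    using y w e by (simp add: m_assoc)
  then have "(e \<otimes> w \<otimes> y) \<otimes> (e \<otimes> w \<otimes> y) = \<zero>"
    using y w e by (simp add: ye)
  then have "e \<otimes> w \<otimes> y = \<zero>"
    by (rule square_zero_imp_zero[rotated]) (use y w e in simp)
  moreover have "e \<otimes> w \<otimes> y = w \<otimes> y \<ominus> y \<otimes> w \<otimes> y"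
    using y w by (simp add: e_def minus_eq l_distr l_minus)
  ultimately have "w \<otimes> y = y \<otimes> w \<otimes> y"
    using y w by (simp add: r_right_minus_eq)
  then show ?thesis
    using yw by simp
qed

lemma idempotent_trivial:
  assumes y: "y \<in> carrier A" and idem: "y \<otimes> y = y"
  shows "y = \<zero> \<or> y = \<one>"
proof (cases "y = \<zero>")
  case False
  then have "y \<in> Units A"
    using y idempotent_central[OF y idem] by (intro central_imp_Units)
  then show ?thesis
    using Units_l_cancel[of y y \<one>] y idem by simp
qed simp

lemma quadratic_imp_zero_or_scalar:
  assumes z: "z \<in> carrier A" and \<beta>: "\<beta> \<in> carrier R" "\<beta> \<noteq> \<zero>\<^bsub>R\<^esub>"
    and quadratic: "z \<otimes> z = phi \<beta> \<otimes> z"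
  shows "z = \<zero> \<or> z = phi \<beta>"
proof -
  have unit: "phi \<beta> \<in> Units A"
    using \<beta> by (rule phi_Units_nonzero)
  have "inv (phi \<beta>) \<otimes> z = \<zero> \<or> inv (phi \<beta>) \<otimes> z = \<one>"
    using unit \<beta> z quadratic by (intro idempotent_trivial idempotent_of_quadratic phi_central) simp_all
  moreover have "z = phi \<beta> \<otimes> (inv (phi \<beta>) \<otimes> z)"
    using unit \<beta> z by (simp add: m_assoc[symmetric])
  ultimately show ?thesis
    using \<beta> by auto
qed

lemma quadratic_imp_frac_rep:
  assumes x: "x \<in> carrier A" and \<alpha>: "\<alpha> \<in> carrier R" "\<alpha> \<noteq> \<zero>\<^bsub>R\<^esub>" and \<beta>: "\<beta> \<in> carrier R"
    and quadratic: "phi \<alpha> \<otimes> (x \<otimes> x) = phi \<beta> \<otimes> x"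
  shows "\<exists>p. frac_rep R A phi x p"
proof -
  have unit: "phi \<alpha> \<in> Units A"
    using \<alpha> by (rule phi_Units_nonzero)
  have zero: ?thesis if "phi \<alpha> \<otimes> x = \<zero>"
  proof -
    have "x = \<zero>"
      using Units_l_cancel[OF unit x, of \<zero>] \<alpha> that by simp
    then show ?thesis
      using frac_rep_phi[OF domain_R, of "\<zero>\<^bsub>R\<^esub>"] by auto
  qed
  show ?thesis
  proof (cases "\<beta> = \<zero>\<^bsub>R\<^esub>")
    case True
    then have "phi \<alpha> \<otimes> (x \<otimes> x) = phi \<alpha> \<otimes> \<zero>"
      using x \<alpha> quadratic by simp
    then have "x \<otimes> x = \<zero>"
      using Units_l_cancel[OF unit] x by simp
    then have "x = \<zero>"
      by (rule square_zero_imp_zero[OF x])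
    then show ?thesis
      using \<alpha> zero by simp
  next
    case False
    have "(phi \<alpha> \<otimes> x) \<otimes> (phi \<alpha> \<otimes> x) = phi \<alpha> \<otimes> (phi \<alpha> \<otimes> (x \<otimes> x))"
      using x \<alpha> phi_smult_mult[of \<alpha> \<alpha> x x] by (simp add: m_assoc)
    also have "\<dots> = phi \<beta> \<otimes> (phi \<alpha> \<otimes> x)"
      using x \<alpha> \<beta> phi_central[of \<alpha> "phi \<beta>"] by (simp add: quadratic m_assoc[symmetric])
    finally have "phi \<alpha> \<otimes> x = \<zero> \<or> phi \<alpha> \<otimes> x = phi \<beta>"
      using x \<alpha> \<beta> False by (intro quadratic_imp_zero_or_scalar) simp_all
    moreover have "frac_rep R A phi x (\<beta>, \<alpha>)" if "phi \<alpha> \<otimes> x = phi \<beta>"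
      using \<alpha> \<beta> that by (simp add: frac_rep_def)
    ultimately show ?thesis
      using zero by blast
  qed
qed

lemma quadratic_of_not_mathieu:
  assumes x: "x \<in> carrier A" and not_mathieu: "\<not> is_mathieu_subspace R A phi (frac_multiples R A phi x)"
  obtains \<alpha> \<beta> where "\<alpha> \<in> carrier R" "\<alpha> \<noteq> \<zero>\<^bsub>R\<^esub>" "\<beta> \<in> carrier R" "phi \<alpha> \<otimes> (x \<otimes> x) = phi \<beta> \<otimes> x"
proof -
  let ?K = "frac_multiples R A phi x"
  have K: "is_submodule R A phi ?K"
    using domain_R x by (rule submodule_frac_multiples)
  then obtain a b c where a: "a \<in> carrier A" and powers: "\<forall>m::nat. m \<ge> 1 \<longrightarrow> a [^] m \<in> ?K"
    and bc: "b \<in> carrier A" "c \<in> carrier A"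
    and not_eventually: "\<not> (\<exists>N::nat. \<forall>m\<ge>N. b \<otimes> a [^] m \<otimes> c \<in> ?K)"
    using not_mathieu unfolding is_mathieu_subspace_def by blast
  have "a \<in> ?K" and "a \<otimes> a \<in> ?K"
    using powers[rule_format, of 1] powers[rule_format, of 2] a by (simp_all add: numeral_2_eq_2)
  then obtain r s r2 s2 where rs: "r \<in> carrier R" "s \<in> carrier R" "s \<noteq> \<zero>\<^bsub>R\<^esub>" "phi s \<otimes> a = phi r \<otimes> x"
    and rs2: "r2 \<in> carrier R" "s2 \<in> carrier R" "s2 \<noteq> \<zero>\<^bsub>R\<^esub>" "phi s2 \<otimes> (a \<otimes> a) = phi r2 \<otimes> x"
    unfolding frac_multiples_def by auto
  have "r \<noteq> \<zero>\<^bsub>R\<^esub>"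
  proof
    assume "r = \<zero>\<^bsub>R\<^esub>"
    then have "phi s \<otimes> a = phi s \<otimes> \<zero>"
      using rs x by simp
    then have "a = \<zero>"
      using Units_l_cancel[OF phi_Units_nonzero[OF rs(2,3)] a] by simp
    then have "b \<otimes> a [^] m \<otimes> c \<in> ?K" if "m \<ge> 1" for m :: nat
      using K bc that unfolding is_submodule_def by (cases m) auto
    then show False
      using not_eventually by blast
  qed
  then have nonzero: "s2 \<otimes>\<^bsub>R\<^esub> (r \<otimes>\<^bsub>R\<^esub> r) \<noteq> \<zero>\<^bsub>R\<^esub>"
    using rs rs2 domain.integral_iff[OF domain_R] by simp
  have eq: "phi (s2 \<otimes>\<^bsub>R\<^esub> (r \<otimes>\<^bsub>R\<^esub> r)) \<otimes> (x \<otimes> x) = phi (s \<otimes>\<^bsub>R\<^esub> s \<otimes>\<^bsub>R\<^esub> r2) \<otimes> x"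
    using a x rs(1,2,4) rs2(1,2,4) by (rule square_relation_of_multiples)
  show ?thesis
    by (rule that[OF _ nonzero _ eq]) (use rs rs2 in simp_all)
qed

lemma frac_rep_exists_strongly_simple:
  assumes x: "x \<in> carrier A"
  shows "\<exists>p. frac_rep R A phi x p"
proof (cases "is_mathieu_subspace R A phi (frac_multiples R A phi x)")
  case True
  then show ?thesis
    using strongly_simple frac_rep_of_trivial_frac_multiples[OF domain_R x]
    unfolding strongly_simple_def by blast
next
  case False
  then obtain \<alpha> \<beta> where "\<alpha> \<in> carrier R" "\<alpha> \<noteq> \<zero>\<^bsub>R\<^esub>" "\<beta> \<in> carrier R"
    "phi \<alpha> \<otimes> (x \<otimes> x) = phi \<beta> \<otimes> x"
    using quadratic_of_not_mathieu x by blast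
  then show ?thesis
    using quadratic_imp_frac_rep x by blast
qed

end

sublocale strongly_simple_algebra \<subseteq> algebra_of_fractions
proof -
  have "algebra_of_fractions_axioms R A phi"
    using domain_R phi_Units_nonzero frac_rep_exists_strongly_simple
    by (rule algebra_of_fractions_axioms.intro)
  then show "algebra_of_fractions R A phi"
    by (intro algebra_of_fractions.intro faithful_algebra_axioms)
qed

theorem theorem6p2:
  fixes R :: "('r, 'm) ring_scheme" and A :: "('a, 'n) ring_scheme" and phi :: "'r \<Rightarrow> 'a"
  assumes alg: "is_algebra R A phi"
    and nonzero: "\<one>\<^bsub>A\<^esub> \<noteq> \<zero>\<^bsub>A\<^esub>"
    and inj: "inj_on phi (carrier R)"
  shows "strongly_simple R A phi \<longleftrightarrow>
           (domain R \<and>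
            algebra_iso R A phi (frac_field R) (frac_embed R) \<and>
            strongly_simple R (frac_field R) (frac_embed R))"
proof -
  interpret faithful_algebra R A phi
    using alg inj by unfold_locales
  have iso_imp_iff: "algebra_iso R A phi (frac_field R) (frac_embed R) \<Longrightarrow>
      strongly_simple R A phi \<longleftrightarrow> strongly_simple R (frac_field R) (frac_embed R)"
    unfolding algebra_iso_def using strongly_simple_iff_frac_field by blast
  show ?thesis
  proof
    assume ss: "strongly_simple R A phi"
    then interpret strongly_simple_algebra R A phi
      using nonzero by unfold_locales
    have "algebra_iso R A phi (frac_field R) (frac_embed R)"
      unfolding algebra_iso_def using to_frac_ring_iso to_frac_phi by blast
    then show "domain R \<and> algebra_iso R A phi (frac_field R) (frac_embed R) \<and>
        strongly_simple R (frac_field R) (frac_embed R)"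
      using domain_R iso_imp_iff ss by blast
  qed (use iso_imp_iff in blast)
qed

end
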